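(* For each $n\in\mathbb N$ we have $\log p^{(j)}_n\sim j\log j$ as $j\to+\infty$.
   Context: Let $p_n$ denote the $n$-th prime number. Define $p^{(0)}_n=n$ and recursively $p^{(k+1)}_n=p_{p^{(k)}_n}$ for $k\in\mathbb N_0$. $\log$ is the natural logarithm and $a_j\sim b_j$ means $a_j/b_j\to1$. *)

theory Defs
  imports "HOL-Computational_Algebra.Primes" "HOL-Library.Landau_Symbols"
begin

text \<open>The n-th prime p_n, 1-indexed: p_1 = 2, p_2 = 3, ... It is the least prime p
  such that exactly n primes are at most p. (The value for n = 0 is irrelevant.)\<close>
definition nth_prime :: "nat \<Rightarrow> nat" where
  "nth_prime n = (LEAST p. prime p \<and> card {q. prime q \<and> q \<le> p} = n)"

primrec iter_prime :: "nat \<Rightarrow> nat \<Rightarrow> nat" where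
  "iter_prime 0 n = n"
| "iter_prime (Suc k) n = nth_prime (iter_prime k n)"

end

theory Submission
  imports Defs "HOL-Real_Asymp.Real_Asymp"
begin

text \<open>Chebyshev's estimates (\<open>\<pi>(x) ln x\<close> lies between two constant multiples of \<open>x\<close>)
  give \<open>ln p_m = ln m + ln (ln m) + O(1)\<close>. Hence \<open>L_j = ln p^(j)_n\<close> satisfies
  \<open>L_(j+1) = L_j + ln L_j + O(1)\<close> with \<open>L_j \<rightarrow> \<infinity>\<close>. The increments of such a sequence are
  eventually at least 1, so \<open>j = O(L_j)\<close>, and an induction gives \<open>L_j = O(j ln j)\<close>; thus
  \<open>ln L_j = ln j + o(ln j)\<close>, and summing the increments \<open>ln j + o(ln j)\<close> yields
  \<open>L_j \<sim> j ln j\<close>.\<close>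

section \<open>Counting primes\<close>

definition prime_pi :: "nat \<Rightarrow> nat" where
  "prime_pi x = card {p. prime p \<and> p \<le> x}"

lemma prime_pi_Suc: "prime_pi (Suc x) = prime_pi x + (if prime (Suc x) then 1 else 0)"
proof -
  have "{p. prime p \<and> p \<le> Suc x} =
      (if prime (Suc x) then insert (Suc x) {p. prime p \<and> p \<le> x} else {p. prime p \<and> p \<le> x})"
    by (auto simp: le_Suc_eq)
  then show ?thesis
    unfolding prime_pi_def by auto
qed

lemma prime_pi_mono: "x \<le> y \<Longrightarrow> prime_pi x \<le> prime_pi y"
  unfolding prime_pi_def by (intro card_mono) auto

lemma prime_pi_less: "1 \<le> x \<Longrightarrow> prime_pi x < x"
proof -
  assume "1 \<le> x"
  have "{p. prime p \<and> p \<le> x} \<subseteq> {2..x}"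
    by (auto simp: prime_ge_2_nat)
  then have "prime_pi x \<le> card {2..x}"
    unfolding prime_pi_def by (intro card_mono) auto
  with \<open>1 \<le> x\<close> show ?thesis by simp
qed

lemma prime_pi_unbounded: "\<exists>x. m \<le> prime_pi x"
proof -
  obtain S where S: "finite S" "card S = m" "S \<subseteq> {p::nat. prime p}"
    using infinite_arbitrarily_large[OF primes_infinite] by blast
  then have "S \<subseteq> {p. prime p \<and> p \<le> Max S}"
    using Max_ge by blast
  then have "card S \<le> prime_pi (Max S)"
    unfolding prime_pi_def by (intro card_mono) auto
  with S(2) show ?thesis
    by blast
qed

lemma ex_prime_with_prime_pi_eq:
  assumes "1 \<le> m" "m \<le> prime_pi x"
  shows "\<exists>p. prime p \<and> prime_pi p = m"
  using assms(2)
proof (induction x)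
  case 0
  have "{p::nat. prime p \<and> p \<le> 0} = {}"
    by auto
  then have "prime_pi 0 = 0"
    unfolding prime_pi_def by (simp only: card.empty)
  with 0 assms(1) show ?case
    by simp
next
  case (Suc x)
  show ?case
  proof (cases "m \<le> prime_pi x")
    case True
    with Suc.IH show ?thesis .
  next
    case False
    with Suc.prems have "prime (Suc x) \<and> prime_pi (Suc x) = m"
      by (auto simp: prime_pi_Suc split: if_splits)
    then show ?thesis ..
  qed
qed

lemma nth_prime_spec:
  assumes "1 \<le> m"
  shows "prime (nth_prime m)" and "prime_pi (nth_prime m) = m"
proof -
  obtain x where "m \<le> prime_pi x"
    using prime_pi_unbounded by blast
  then obtain p where "prime p" "prime_pi p = m"
    using ex_prime_with_prime_pi_eq[OF assms] by blast
  then have "\<exists>p::nat. prime p \<and> card {q. prime q \<and> q \<le> p} = m"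
    unfolding prime_pi_def by blast
  from LeastI_ex[OF this] show "prime (nth_prime m)" "prime_pi (nth_prime m) = m"
    unfolding nth_prime_def prime_pi_def by simp_all
qed

lemma nth_prime_gt: "1 \<le> m \<Longrightarrow> m < nth_prime m"
  using prime_pi_less[of "nth_prime m"] nth_prime_spec[of m] prime_ge_1_nat by simp

section \<open>Chebyshev's bounds\<close>

lemma prod_primes_dvd:
  fixes N :: nat
  assumes "finite S" "\<And>p. p \<in> S \<Longrightarrow> prime p" "\<And>p. p \<in> S \<Longrightarrow> p dvd N"
  shows "\<Prod>S dvd N"
  using assms
proof (induction S rule: finite_induct)
  case (insert p S)
  have "coprime p (\<Prod>S)"
    using insert by (intro prod_coprime_right) (auto intro: primes_coprime)
  with insert show ?case
    by (simp add: divides_mult)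
qed simp

lemma binomial_odd_middle_le: "(2*m+1) choose (m+1) \<le> 4^m"
proof -
  have "2 * ((2*m+1) choose (m+1)) = (\<Sum>k\<in>{m, m+1}. (2*m+1) choose k)"
    using binomial_symmetric[of m "2*m+1"] by simp
  also have "\<dots> \<le> (\<Sum>k\<le>2*m+1. (2*m+1) choose k)"
    by (intro sum_mono2) auto
  also have "\<dots> = 2^(2*m+1)"
    by (rule choose_row_sum)
  finally show ?thesis
    by (simp add: power_mult)
qed

lemma prime_dvd_binomial_odd_middle:
  assumes "prime p" "m+2 \<le> p" "p \<le> 2*m+1"
  shows "p dvd (2*m+1) choose (m+1)"
proof -
  have "fact (m+1) * fact m * ((2*m+1) choose (m+1)) = (fact (2*m+1) :: nat)"
    using binomial_fact_lemma[of "m+1" "2*m+1"] by simp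
  moreover have "p dvd (fact (2*m+1) :: nat)" "\<not> p dvd (fact (m+1) :: nat)" "\<not> p dvd (fact m :: nat)"
    using assms(2,3) unfolding prime_dvd_fact_iff[OF assms(1)] by linarith+
  ultimately show ?thesis
    using assms(1) by (metis prime_dvd_mult_iff)
qed

definition primorial :: "nat \<Rightarrow> nat" where
  "primorial x = \<Prod>{p. prime p \<and> p \<le> x}"

lemma primorial_le_four_pow: "primorial x \<le> 4^x"
proof (induction x rule: less_induct)
  case (less x)
  consider "x \<le> 1" | "x = 2" | "2 < x" "even x" | m where "x = 2*m+1" "1 \<le> m"
  proof (cases "even x")
    case True
    with that(1-3) show ?thesis
      by (cases "x \<le> 1"; cases "x = 2") auto
  next
    case False
    then obtain m where "x = 2*m+1"
      by (rule oddE)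
    with that(1,4) show ?thesis
      by (cases "m = 0") auto
  qed
  then show ?case
  proof cases
    case 1
    then have primes: "{p. prime p \<and> p \<le> x} = {}"
      by (auto dest: prime_ge_2_nat)
    show ?thesis
      unfolding primorial_def primes by simp
  next
    case 2
    then have primes: "{p. prime p \<and> p \<le> x} = {2}"
      by (auto dest: prime_ge_2_nat)
    show ?thesis
      unfolding primorial_def primes using 2 by simp
  next
    case 3
    then have "{p. prime p \<and> p \<le> x} = {p. prime p \<and> p \<le> x - 1}"
      using prime_odd_nat[of x] by (auto simp: le_less)
    then have "primorial x = primorial (x - 1)"
      unfolding primorial_def by simp
    also have "\<dots> \<le> 4^(x - 1)"
      using 3 less by simp
    also have "\<dots> \<le> 4^x"
      by (intro power_increasing) auto
    finally show ?thesis .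
  next
    case 4
    define Q where "Q = {p. prime p \<and> m+2 \<le> p \<and> p \<le> 2*m+1}"
    have "{p. prime p \<and> p \<le> x} = {p. prime p \<and> p \<le> m+1} \<union> Q"
      "{p. prime p \<and> p \<le> m+1} \<inter> Q = {}"
      unfolding Q_def 4 by auto
    then have "primorial x = primorial (m+1) * \<Prod>Q"
      unfolding primorial_def by (simp add: prod.union_disjoint Q_def)
    also have "\<dots> \<le> 4^(m+1) * 4^m"
    proof (rule mult_le_mono)
      show "primorial (m+1) \<le> 4^(m+1)"
        using 4 by (intro less) auto
      have Q_dvd: "p dvd (2*m+1) choose (m+1)" if "p \<in> Q" for p
        using that prime_dvd_binomial_odd_middle unfolding Q_def by blast
      have "\<Prod>Q dvd (2*m+1) choose (m+1)"
        by (rule prod_primes_dvd[OF _ _ Q_dvd]) (auto simp: Q_def)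
      then have "\<Prod>Q \<le> (2*m+1) choose (m+1)"
        by (intro dvd_imp_le) auto
      then show "\<Prod>Q \<le> 4^m"
        using binomial_odd_middle_le order.trans by blast
    qed
    also have "\<dots> = 4^x"
      using 4 by (simp flip: power_add)
    finally show ?thesis .
  qed
qed

lemma sum_ln_primes_le: "(\<Sum>p | prime p \<and> p \<le> x. ln (real p)) \<le> ln 4 * real x"
proof -
  have "(\<Sum>p | prime p \<and> p \<le> x. ln (real p)) = ln (real (primorial x))"
    unfolding primorial_def of_nat_prod by (rule ln_prod[symmetric]) (auto simp: prime_gt_0_nat)
  also have "\<dots> \<le> ln (4 ^ x)"
  proof -
    have "0 < primorial x"
      unfolding primorial_def by (intro prod_pos) (auto simp: prime_gt_0_nat)
    with primorial_le_four_pow[of x] show ?thesis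
      by (simp flip: of_nat_le_iff)
  qed
  also have "\<dots> = ln 4 * real x"
    by (simp add: ln_realpow)
  finally show ?thesis .
qed

lemma prime_pi_upper_bound:
  assumes "2 \<le> x"
  shows "real (prime_pi x) * ln (real x) \<le> 6 * real x"
proof -
  define s where "s = sqrt (real x)"
  define P where "P = {p. prime p \<and> p \<le> x}"
  have "finite P"
    unfolding P_def by auto
  have s: "1 \<le> s" "ln (real x) = 2 * ln s" "s * s = real x"
    unfolding s_def using assms by (auto simp: ln_sqrt)
  have small: "real (card {p \<in> P. real p \<le> s}) \<le> s"
  proof -
    have "{p \<in> P. real p \<le> s} \<subseteq> {1..nat \<lfloor>s\<rfloor>}"
      unfolding P_def using prime_ge_1_nat by (auto simp: le_nat_floor)
    then have "card {p \<in> P. real p \<le> s} \<le> card {1..nat \<lfloor>s\<rfloor>}"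
      by (intro card_mono) auto
    then have "card {p \<in> P. real p \<le> s} \<le> nat \<lfloor>s\<rfloor>"
      by simp
    with s(1) show ?thesis
      by linarith
  qed
  \<comment> \<open>Primes above the square root satisfy \<open>ln x < 2 ln p\<close>.\<close>
  have term_bound: "ln (real x) \<le> 2 * ln (real p) + (if real p \<le> s then ln (real x) else 0)"
    if "p \<in> P" for p
  proof -
    have "1 \<le> real p"
      using that prime_ge_1_nat unfolding P_def by auto
    show ?thesis
    proof (cases "real p \<le> s")
      case True
      with \<open>1 \<le> real p\<close> show ?thesis
        by simp
    next
      case False
      then have "ln s \<le> ln (real p)"
        using s(1) by simp
      with s(2) False show ?thesis
        by simp
    qed
  qed
  have "real (prime_pi x) * ln (real x) = (\<Sum>p\<in>P. ln (real x))"
    unfolding prime_pi_def P_def by simp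
  also have "\<dots> \<le> (\<Sum>p\<in>P. 2 * ln (real p) + (if real p \<le> s then ln (real x) else 0))"
    by (rule sum_mono) (rule term_bound)
  also have "\<dots> = 2 * (\<Sum>p\<in>P. ln (real p)) + real (card {p \<in> P. real p \<le> s}) * ln (real x)"
    using \<open>finite P\<close>
    by (simp only: sum.distrib sum_distrib_left sum.inter_filter[symmetric] sum_constant)
  also have "\<dots> \<le> 2 * (2 * real x) + 2 * real x"
  proof (intro add_mono)
    have "ln (4::real) \<le> 2"
      using ln_2_less_1 ln_realpow[of 2 2] by simp
    then have "ln 4 * real x \<le> 2 * real x"
      by (intro mult_right_mono) auto
    then show "2 * (\<Sum>p\<in>P. ln (real p)) \<le> 2 * (2 * real x)"
      using sum_ln_primes_le[of x] unfolding P_def by linarith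
    have "real (card {p \<in> P. real p \<le> s}) * ln (real x) \<le> s * ln (real x)"
      using small assms by (intro mult_right_mono) auto
    also have "\<dots> = 2 * (s * ln s)"
      using s(2) by simp
    also have "\<dots> \<le> 2 * (s * (s - 1))"
      using ln_le_minus_one[of s] s(1) by (intro mult_left_mono) auto
    also have "\<dots> \<le> 2 * real x"
      using s(1,3) by (simp add: algebra_simps)
    finally show "real (card {p \<in> P. real p \<le> s}) * ln (real x) \<le> 2 * real x" .
  qed
  finally show ?thesis
    by simp
qed

lemma multiplicity_fact:
  fixes p :: nat
  assumes "prime p" "m \<le> N"
  shows "multiplicity p (fact m) = (\<Sum>i\<in>{1..N}. m div p^i)"
  using assms(2)
proof (induction m)
  case (Suc m)
  have "p ^ i > 0" for i
    using assms(1) prime_gt_0_nat by simp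
  then have Suc_div: "Suc m div p^i = m div p^i + (if p^i dvd Suc m then 1 else 0)" for i
    by (auto simp: div_Suc mod_eq_0_iff_dvd)
  have dvd_iff: "p^i dvd Suc m \<longleftrightarrow> i \<le> multiplicity p (Suc m)" for i
    by (rule power_dvd_iff_le_multiplicity) (use assms(1) in auto)
  have "multiplicity p (Suc m) < 2 ^ multiplicity p (Suc m)"
    by (rule less_exp)
  also have "\<dots> \<le> p ^ multiplicity p (Suc m)"
    using assms(1) prime_ge_2_nat by (intro power_mono) auto
  also have "\<dots> \<le> Suc m"
    by (intro dvd_imp_le multiplicity_dvd) auto
  finally have "{i \<in> {1..N}. p^i dvd Suc m} = {1..multiplicity p (Suc m)}"
    using Suc.prems unfolding dvd_iff by auto
  then have "multiplicity p (Suc m) = card {i \<in> {1..N}. p^i dvd Suc m}"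
    by simp
  also have "\<dots> = (\<Sum>i\<in>{1..N}. if p^i dvd Suc m then 1 else 0)"
    by (simp only: card_eq_sum sum.inter_filter[OF finite_atLeastAtMost])
  moreover have "multiplicity p (fact (Suc m)) = multiplicity p (Suc m) + multiplicity p (fact m)"
    unfolding fact_Suc of_nat_id using assms(1)
    by (intro prime_elem_multiplicity_mult_distrib) auto
  ultimately show ?case
    using Suc by (simp add: Suc_div sum.distrib)
qed simp

lemma double_div_le: "0 < q \<Longrightarrow> (2 * n) div q \<le> 2 * (n div q) + 1"
  for n q :: nat
proof -
  assume "0 < q"
  have "2 * n = 2 * (n div q) * q + 2 * (n mod q)"
    by (metis div_mult_mod_eq distrib_left mult.assoc)
  also have "\<dots> < (2 * (n div q) + 2) * q"
    using \<open>0 < q\<close> by (simp add: algebra_simps)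
  finally have "2 * n div q < 2 * (n div q) + 2"
    by (rule less_mult_imp_div_less)
  then show ?thesis
    by simp
qed

lemma prime_power_multiplicity_central_binomial_le:
  fixes p :: nat
  assumes "prime p" "1 \<le> n"
  shows "p ^ multiplicity p ((2*n) choose n) \<le> 2*n"
proof (rule ccontr)
  define e where "e = multiplicity p ((2*n) choose n)"
  define I where "I = {i \<in> {1..2*n}. p^i \<le> 2*n}"
  assume "\<not> ?thesis"
  then have "2*n < p^e"
    unfolding e_def by simp
  have p2: "2 \<le> p"
    using assms(1) prime_ge_2_nat by auto
  have "fact (2*n) = fact n * fact n * ((2*n) choose n)"
    using binomial_fact_lemma[of n "2*n"] by (simp add: mult_2)
  then have "multiplicity p (fact (2*n)) = 2 * multiplicity p (fact n) + e"
    using assms(1) unfolding e_def by (simp add: prime_elem_multiplicity_mult_distrib)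
  then have legendre: "(\<Sum>i\<in>{1..2*n}. (2*n) div p^i) = 2 * (\<Sum>i\<in>{1..2*n}. n div p^i) + e"
    using multiplicity_fact[OF assms(1), of n "2*n"] multiplicity_fact[OF assms(1), of "2*n" "2*n"]
    by simp
  have "(\<Sum>i\<in>{1..2*n}. (2*n) div p^i)
      \<le> (\<Sum>i\<in>{1..2*n}. 2 * (n div p^i) + (if p^i \<le> 2*n then 1 else 0))"
    using p2 double_div_le[of "p^_" n] by (intro sum_mono) auto
  also have "\<dots> = 2 * (\<Sum>i\<in>{1..2*n}. n div p^i) + card I"
    unfolding I_def
    by (simp only: sum.distrib sum_distrib_left card_eq_sum sum.inter_filter[OF finite_atLeastAtMost])
  finally have "e \<le> card I"
    unfolding legendre by simp
  moreover have "I \<subseteq> {1..<e}"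
  proof
    fix i
    assume "i \<in> I"
    then have "1 \<le> i" "p^i < p^e"
      using \<open>2*n < p^e\<close> unfolding I_def by auto
    then show "i \<in> {1..<e}"
      using p2 power_strict_increasing_iff[of p i e] by simp
  qed
  then have "card I \<le> e - 1"
    using card_mono[of "{1..<e}" I] by simp
  moreover have "e \<noteq> 0"
    using \<open>2*n < p^e\<close> assms(2) by (cases e) auto
  ultimately show False
    by linarith
qed

lemma central_binomial_le_pow_prime_pi:
  assumes "1 \<le> n"
  shows "(2*n) choose n \<le> (2*n) ^ prime_pi (2*n)"
proof -
  define C where "C = (2*n) choose n"
  have "C \<noteq> 0"
    unfolding C_def by simp
  have "prime_factors C \<subseteq> {p. prime p \<and> p \<le> 2*n}"
  proof
    fix p
    assume p: "p \<in> prime_factors C"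
    have "fact n * fact n * C = fact (2*n)"
      unfolding C_def using binomial_fact_lemma[of n "2*n"] by (simp add: mult_2)
    then have "C dvd fact (2*n)"
      by (metis dvd_triv_right)
    then have "p dvd fact (2*n)"
      using p dvd_trans by blast
    with p show "p \<in> {p. prime p \<and> p \<le> 2*n}"
      using prime_dvd_fact_iff by auto
  qed
  have "C = (\<Prod>p\<in>prime_factors C. p ^ multiplicity p C)"
    using prod_prime_factors[OF \<open>C \<noteq> 0\<close>] by simp
  also have "\<dots> \<le> (\<Prod>p\<in>prime_factors C. 2*n)"
    unfolding C_def using assms
    by (intro prod_mono) (auto intro: prime_power_multiplicity_central_binomial_le)
  also have "\<dots> = (2*n) ^ card (prime_factors C)"
    by simp
  also have "\<dots> \<le> (2*n) ^ prime_pi (2*n)"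
    unfolding prime_pi_def using assms \<open>prime_factors C \<subseteq> _\<close>
    by (intro power_increasing card_mono) auto
  finally show ?thesis
    unfolding C_def .
qed

lemma prime_pi_lower_bound:
  assumes "2 \<le> x"
  shows "(real x - 1) * ln 2 - ln (real x) \<le> real (prime_pi x) * ln (real x)"
proof -
  define n where "n = x div 2"
  have n: "1 \<le> n" "2*n \<le> x" "real x - 1 \<le> 2 * real n"
    using assms unfolding n_def by linarith+
  have "4^n / (2 * real n) \<le> real ((2*n) choose n)"
    using central_binomial_lower_bound n(1) by simp
  also have "\<dots> \<le> real ((2*n) ^ prime_pi (2*n))"
    using central_binomial_le_pow_prime_pi[OF n(1)] by (simp only: of_nat_le_iff)
  also have "\<dots> = (2 * real n) ^ prime_pi (2*n)"
    by simp
  finally have "4^n \<le> (2 * real n) ^ Suc (prime_pi (2*n))"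
    using n(1) by (simp add: field_simps)
  then have "ln (4^n) \<le> ln ((2 * real n) ^ Suc (prime_pi (2*n)))"
    using n(1) by simp
  then have "real n * ln 4 \<le> real (Suc (prime_pi (2*n))) * ln (2 * real n)"
    using n(1) by (simp only: ln_realpow)
  moreover have "real (prime_pi (2*n)) * ln (2 * real n) \<le> real (prime_pi x) * ln (real x)"
    using n by (intro mult_mono) (auto intro: prime_pi_mono)
  moreover have "ln (2 * real n) \<le> ln (real x)"
    using n by simp
  moreover have "(real x - 1) * ln 2 \<le> real n * ln 4"
    using n(3) ln_realpow[of 2 2] by (simp add: mult_right_mono)
  ultimately show ?thesis
    by (simp add: algebra_simps)
qed

section \<open>Size of the m-th prime\<close>

lemma ln_le_half: "0 < y \<Longrightarrow> ln y \<le> y / 2" for y :: real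
proof -
  assume "0 < y"
  then have "ln y = ln 2 + ln (y / 2)"
    by (simp add: ln_div)
  also have "\<dots> \<le> ln 2 + (y / 2 - 1)"
    using ln_le_minus_one[of "y / 2"] \<open>0 < y\<close> by simp
  finally show ?thesis
    using ln_2_less_1 by simp
qed

lemma ln_2_ge_half: "1 / 2 \<le> ln (2::real)"
proof -
  have "1 + (- 1 / 2) \<le> exp (- 1 / 2 :: real)"
    by (rule exp_ge_add_one_self)
  then have "exp (1 / 2 :: real) \<le> 2"
    by (simp add: exp_minus field_simps)
  then show ?thesis
    by (subst ln_ge_iff) auto
qed

lemma nth_prime_lower_bound:
  assumes "1 \<le> m"
  shows "real m * ln (real m) \<le> 6 * real (nth_prime m)"
proof -
  define P where "P = nth_prime m"
  have "m < P" "2 \<le> P" "prime_pi P = m"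
    unfolding P_def using nth_prime_spec[OF assms] nth_prime_gt[OF assms] prime_ge_2_nat by auto
  then have "real m * ln (real P) \<le> 6 * real P"
    using prime_pi_upper_bound[of P] by simp
  moreover have "real m * ln (real m) \<le> real m * ln (real P)"
    using \<open>m < P\<close> assms by (intro mult_left_mono) auto
  ultimately show ?thesis
    unfolding P_def by linarith
qed

lemma nth_prime_le_mult_ln_nth_prime:
  assumes "16 \<le> m"
  shows "real (nth_prime m) \<le> 4 * (real m * ln (real (nth_prime m)))"
proof -
  define P where "P = nth_prime m"
  have "m < P" "2 \<le> P" "prime_pi P = m"
    unfolding P_def using nth_prime_spec[of m] nth_prime_gt[of m] prime_ge_2_nat assms by auto
  have "1 \<le> ln (real P)"
    using \<open>m < P\<close> assms exp_le by (subst ln_ge_iff) auto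
  have "(real P - 1) * 1 \<le> (real P - 1) * (2 * ln 2)"
    using ln_2_ge_half \<open>2 \<le> P\<close> by (intro mult_left_mono) auto
  then have "real P - 1 \<le> 2 * ((real P - 1) * ln 2)"
    by (simp only: mult_1_right mult.left_commute)
  moreover have "(real P - 1) * ln 2 - ln (real P) \<le> real m * ln (real P)"
    using prime_pi_lower_bound[OF \<open>2 \<le> P\<close>] unfolding \<open>prime_pi P = m\<close> .
  moreover have "16 * ln (real P) \<le> real m * ln (real P)"
    using assms \<open>1 \<le> ln (real P)\<close> by (intro mult_right_mono) auto
  ultimately show ?thesis
    unfolding P_def[symmetric] using \<open>1 \<le> ln (real P)\<close> by linarith
qed

lemma nth_prime_upper_bound:
  assumes "16 \<le> m"
  shows "real (nth_prime m) \<le> 12 * real m * ln (real m)"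
proof -
  define P where "P = nth_prime m"
  note P_le = nth_prime_le_mult_ln_nth_prime[OF assms, folded P_def]
  have "2 \<le> P"
    unfolding P_def using nth_prime_spec[of m] prime_ge_2_nat assms by auto
  with P_le have "0 < ln (real P)"
    using assms by (simp add: zero_less_mult_iff)
  then have "ln (real P) \<le> ln (4 * real m * ln (real P))"
    using P_le \<open>2 \<le> P\<close> by (simp add: mult.assoc)
  also have "\<dots> = ln 4 + ln (real m) + ln (ln (real P))"
    using assms \<open>0 < ln (real P)\<close> by (simp add: ln_mult)
  also have "ln (ln (real P)) \<le> ln (real P) / 2"
    using \<open>0 < ln (real P)\<close> by (rule ln_le_half)
  finally have "ln (real P) \<le> 2 * ln 4 + 2 * ln (real m)"
    by simp
  also have "2 * ln 4 = ln (16::real)"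
    using ln_realpow[of 4 2] by simp
  also have "ln 16 \<le> ln (real m)"
    using assms by simp
  finally have "4 * (real m * ln (real P)) \<le> 4 * (real m * (3 * ln (real m)))"
    by (intro mult_left_mono) auto
  with P_le show ?thesis
    unfolding P_def by simp
qed

lemma ln_nth_prime_bigo:
  "(\<lambda>m. ln (real (nth_prime m)) - ln (real m) - ln (ln (real m))) \<in> O(\<lambda>_. 1)"
proof (rule bigoI[where c = "ln 12"])
  show "\<forall>\<^sub>F m in sequentially.
      norm (ln (real (nth_prime m)) - ln (real m) - ln (ln (real m))) \<le> ln 12 * norm (1::real)"
    using eventually_ge_at_top[of 16]
  proof eventually_elim
    case (elim m)
    have pos: "0 < ln (real m)" "0 < real (nth_prime m)" "0 < real m * ln (real m)"
      using elim nth_prime_gt[of m] by auto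
    have "ln (real m * ln (real m)) \<le> ln (6 * real (nth_prime m))"
      using nth_prime_lower_bound[of m] nth_prime_gt[of m] elim pos(3) by (subst ln_le_cancel_iff) auto
    then have lower: "ln (real m) + ln (ln (real m)) \<le> ln 6 + ln (real (nth_prime m))"
      using pos elim by (simp add: ln_mult)
    have "ln (real (nth_prime m)) \<le> ln (12 * real m * ln (real m))"
      using nth_prime_upper_bound[OF elim] pos by simp
    then have upper: "ln (real (nth_prime m)) \<le> ln 12 + ln (real m) + ln (ln (real m))"
      using pos elim by (simp add: ln_mult)
    have "ln (6::real) \<le> ln 12"
      by simp
    with lower upper show ?case
      unfolding real_norm_def norm_one mult_1_right abs_le_iff by linarith
  qed
qed

section \<open>A logarithmic recurrence\<close>

lemma real_bigo_of_increments_ge_1: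
  fixes L :: "nat \<Rightarrow> real"
  assumes "eventually (\<lambda>k. 1 \<le> L (Suc k) - L k) sequentially"
  shows "(\<lambda>j. real j) \<in> O(L)"
proof -
  obtain K where K: "\<And>k. K \<le> k \<Longrightarrow> 1 \<le> L (Suc k) - L k"
    using assms unfolding eventually_sequentially by blast
  have telescope: "real j - real K \<le> L j - L K" if "K \<le> j" for j
  proof -
    have "real j - real K = (\<Sum>k=K..<j. 1)"
      using that by (simp add: of_nat_diff)
    also have "\<dots> \<le> (\<Sum>k=K..<j. L (Suc k) - L k)"
      using K by (intro sum_mono) auto
    also have "\<dots> = L j - L K"
      using that by (rule sum_Suc_diff')
    finally show ?thesis .
  qed
  have "eventually (\<lambda>j. real K + \<bar>L K\<bar> \<le> real j / 2) sequentially"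
    by real_asymp
  then have "eventually (\<lambda>j. norm (real j) \<le> 2 * norm (L j)) sequentially"
    using eventually_ge_at_top[of K]
  proof eventually_elim
    case (elim j)
    with telescope[of j] show ?case
      by auto
  qed
  then show ?thesis
    by (rule bigoI)
qed

lemma mult_ln_Suc_ge:
  assumes "1 \<le> k"
  shows "real k * ln (real k) + ln (real k) + 1 \<le> real (Suc k) * ln (real (Suc k))"
proof -
  have "ln (real k / real (Suc k)) \<le> real k / real (Suc k) - 1"
    using assms by (intro ln_le_minus_one) simp
  then have "1 / real (Suc k) \<le> ln (real (Suc k)) - ln (real k)"
    using assms by (simp add: ln_div field_simps)
  then have "1 \<le> real (Suc k) * (ln (real (Suc k)) - ln (real k))"
    by (simp add: field_simps)
  then show ?thesis
    by (simp add: algebra_simps)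
qed

lemma log_recurrence_le_mult_ln:
  fixes L :: "nat \<Rightarrow> real"
  assumes rec: "\<And>k. K \<le> k \<Longrightarrow> 0 < L k \<and> L (Suc k) \<le> L k + ln (L k) + C"
    and "1 \<le> K" "2 \<le> A" "ln A + C \<le> A" "L K \<le> A * (real K * ln (real K))"
    and "K \<le> j"
  shows "L j \<le> A * (real j * ln (real j))"
  using \<open>K \<le> j\<close>
proof (induction j rule: dec_induct)
  case (step k)
  have k: "1 \<le> k" "0 < L k" "L (Suc k) \<le> L k + ln (L k) + C"
    using rec[OF step.hyps(1)] step.hyps(1) \<open>1 \<le> K\<close> by auto
  have "ln (real k) \<le> real k"
    using k(1) by (intro ln_bound) simp
  then have "A * (real k * ln (real k)) \<le> A * (real k * real k)"
    using \<open>2 \<le> A\<close> k(1) by (intro mult_left_mono) auto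
  then have "ln (L k) \<le> ln (A * (real k * real k))"
    using step.IH k(2) by simp
  also have "\<dots> = ln A + 2 * ln (real k)"
    using \<open>2 \<le> A\<close> k(1) by (simp add: ln_mult)
  finally have "L (Suc k) \<le> A * (real k * ln (real k)) + ln A + C + 2 * ln (real k)"
    using k(3) step.IH by linarith
  also have "2 * ln (real k) \<le> A * ln (real k)"
    using \<open>2 \<le> A\<close> k(1) by (intro mult_right_mono) auto
  also have "A * (real k * ln (real k)) + ln A + C + A * ln (real k)
      \<le> A * (real k * ln (real k) + ln (real k) + 1)"
    using \<open>ln A + C \<le> A\<close> by (simp add: algebra_simps)
  also have "\<dots> \<le> A * (real (Suc k) * ln (real (Suc k)))"
    using \<open>2 \<le> A\<close> mult_ln_Suc_ge[OF k(1)] by (intro mult_left_mono) auto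
  finally show ?case
    by simp
qed (use assms in simp)

lemma bigo_of_log_recurrence:
  fixes L :: "nat \<Rightarrow> real" and C :: real
  assumes "eventually (\<lambda>k. 0 < L k \<and> L (Suc k) \<le> L k + ln (L k) + C) sequentially"
  shows "L \<in> O(\<lambda>j. real j * ln (real j))"
proof -
  have "eventually (\<lambda>x. ln x + C \<le> x) at_top"
    by real_asymp
  then obtain A0 where A0: "\<And>x. A0 \<le> x \<Longrightarrow> ln x + C \<le> x"
    unfolding eventually_at_top_linorder by blast
  obtain K where K: "\<And>k. K \<le> k \<Longrightarrow> 0 < L k \<and> L (Suc k) \<le> L k + ln (L k) + C"
    using assms unfolding eventually_sequentially by blast
  define J where "J = max K 2"
  define A where "A = max (max A0 2) (L J / (real J * ln (real J)))"
  have "1 \<le> J" "0 < real J * ln (real J)"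
    unfolding J_def by simp_all
  moreover have "L J / (real J * ln (real J)) \<le> A"
    unfolding A_def by simp
  ultimately have "L J \<le> A * (real J * ln (real J))"
    by (simp add: divide_le_eq mult.commute)
  have "2 \<le> A" "ln A + C \<le> A"
    using A0[of A] unfolding A_def by auto
  have rec: "0 < L k \<and> L (Suc k) \<le> L k + ln (L k) + C" if "J \<le> k" for k
    using K that unfolding J_def by simp
  have "eventually (\<lambda>j. norm (L j) \<le> A * norm (real j * ln (real j))) sequentially"
    using eventually_ge_at_top[of J]
  proof eventually_elim
    case (elim j)
    have "L j \<le> A * (real j * ln (real j))"
      by (rule log_recurrence_le_mult_ln[OF rec \<open>1 \<le> J\<close> \<open>2 \<le> A\<close> \<open>ln A + C \<le> A\<close> \<open>L J \<le> _\<close> elim])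
    with rec[OF elim] elim \<open>1 \<le> J\<close> show ?case
      by simp
  qed
  then show ?thesis
    by (rule bigoI)
qed

lemma ln_minus_ln_smallo:
  fixes L :: "nat \<Rightarrow> real"
  assumes "(\<lambda>j. real j) \<in> O(L)" "L \<in> O(\<lambda>j. real j * ln (real j))"
    and "eventually (\<lambda>j. 0 < L j) sequentially"
  shows "(\<lambda>j. ln (L j) - ln (real j)) \<in> o(\<lambda>j. ln (real j))"
proof (rule landau_o.smallI)
  fix \<epsilon> :: real
  assume "0 < \<epsilon>"
  obtain c1 where "0 < c1" and c1: "eventually (\<lambda>j. norm (real j) \<le> c1 * norm (L j)) sequentially"
    using assms(1) by (rule landau_o.bigE)
  obtain c2 where "0 < c2"
    and c2: "eventually (\<lambda>j. norm (L j) \<le> c2 * norm (real j * ln (real j))) sequentially"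
    using assms(2) by (rule landau_o.bigE)
  have "eventually (\<lambda>j. ln c1 \<le> \<epsilon> * ln (real j)) sequentially"
    "eventually (\<lambda>j. ln c2 + ln (ln (real j)) \<le> \<epsilon> * ln (real j)) sequentially"
    using \<open>0 < \<epsilon>\<close> by real_asymp+
  then show "eventually (\<lambda>j. norm (ln (L j) - ln (real j)) \<le> \<epsilon> * norm (ln (real j))) sequentially"
    using c1 c2 assms(3) eventually_ge_at_top[of 3]
  proof eventually_elim
    case (elim j)
    have pos: "0 < ln (real j)" "0 < L j"
      using elim by auto
    have "ln (real j) \<le> ln (c1 * L j)"
      using elim pos \<open>0 < c1\<close> by simp
    then have lower: "ln (real j) \<le> ln c1 + ln (L j)"
      using pos \<open>0 < c1\<close> by (simp add: ln_mult)
    have "ln (L j) \<le> ln (c2 * (real j * ln (real j)))"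
      using elim pos \<open>0 < c2\<close> by simp
    then have upper: "ln (L j) \<le> ln c2 + ln (real j) + ln (ln (real j))"
      using pos \<open>0 < c2\<close> elim by (simp add: ln_mult)
    show ?case
      using lower upper elim(1,2) pos(1) by (simp add: abs_le_iff)
  qed
qed

lemma smallo_of_increments_smallo:
  fixes g f :: "nat \<Rightarrow> real"
  assumes "(\<lambda>k. g (Suc k) - g k) \<in> o(f)" and "mono f" and "\<And>k. 0 \<le> f k"
    and "filterlim (\<lambda>j. real j * f j) at_top sequentially"
  shows "g \<in> o(\<lambda>j. real j * f j)"
proof (rule landau_o.smallI)
  fix c :: real
  assume "0 < c"
  define d where "d = c / 2"
  have "0 < d" "c = 2 * d"
    using \<open>0 < c\<close> unfolding d_def by auto
  obtain K where K: "\<And>k. K \<le> k \<Longrightarrow> \<bar>g (Suc k) - g k\<bar> \<le> d * f k"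
    using landau_o.smallD[OF assms(1) \<open>0 < d\<close>] assms(3)
    unfolding eventually_sequentially by auto
  have telescope: "\<bar>g j - g K\<bar> \<le> d * (real j * f j)" if "K \<le> j" for j
  proof -
    have "\<bar>g j - g K\<bar> = \<bar>\<Sum>k=K..<j. g (Suc k) - g k\<bar>"
      using that by (simp add: sum_Suc_diff')
    also have "\<dots> \<le> (\<Sum>k=K..<j. \<bar>g (Suc k) - g k\<bar>)"
      by (rule sum_abs)
    also have "\<dots> \<le> (\<Sum>k=K..<j. d * f j)"
    proof (rule sum_mono)
      fix k
      assume "k \<in> {K..<j}"
      then have "d * f k \<le> d * f j"
        using monoD[OF assms(2)] \<open>0 < d\<close> by (intro mult_left_mono) auto
      with K[of k] \<open>k \<in> {K..<j}\<close> show "\<bar>g (Suc k) - g k\<bar> \<le> d * f j"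
        by auto
    qed
    also have "\<dots> \<le> real j * (d * f j)"
      using \<open>0 < d\<close> assms(3)[of j] by (simp add: mult_right_mono)
    finally show ?thesis
      by (simp add: mult.left_commute)
  qed
  have "eventually (\<lambda>j. \<bar>g K\<bar> / d \<le> real j * f j) sequentially"
    using assms(4) by (simp add: filterlim_at_top)
  then show "eventually (\<lambda>j. norm (g j) \<le> c * norm (real j * f j)) sequentially"
    using eventually_ge_at_top[of K]
  proof eventually_elim
    case (elim j)
    then have "\<bar>g K\<bar> \<le> d * (real j * f j)"
      using \<open>0 < d\<close> by (simp add: divide_le_eq mult.commute)
    moreover have "\<bar>g j\<bar> \<le> \<bar>g j - g K\<bar> + \<bar>g K\<bar>"
      using abs_triangle_ineq[of "g j - g K" "g K"] by simp
    moreover have "norm (real j * f j) = real j * f j"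
      using assms(3)[of j] by simp
    ultimately show ?case
      using telescope[of j] elim \<open>c = 2 * d\<close> by simp
  qed
qed

lemma asymp_equiv_of_log_recurrence:
  fixes L :: "nat \<Rightarrow> real"
  assumes L_lim: "filterlim L at_top sequentially"
    and rec: "(\<lambda>k. L (Suc k) - L k - ln (L k)) \<in> O(\<lambda>_. 1)"
  shows "L \<sim>[sequentially] (\<lambda>j. real j * ln (real j))"
proof -
  obtain C where C: "eventually (\<lambda>k. \<bar>L (Suc k) - L k - ln (L k)\<bar> \<le> C) sequentially"
    using landau_o.bigE[OF rec] by auto
  have pos: "eventually (\<lambda>k. 0 < L k) sequentially"
    using L_lim by (simp add: filterlim_at_top_dense)
  have "eventually (\<lambda>k. C + 1 \<le> ln (L k)) sequentially"
    using filterlim_compose[OF ln_at_top L_lim] by (simp add: filterlim_at_top)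
  with C have "eventually (\<lambda>k. 1 \<le> L (Suc k) - L k) sequentially"
    by eventually_elim (simp add: abs_le_iff)
  then have lower: "(\<lambda>j. real j) \<in> O(L)"
    by (rule real_bigo_of_increments_ge_1)
  from C pos have "eventually (\<lambda>k. 0 < L k \<and> L (Suc k) \<le> L k + ln (L k) + C) sequentially"
    by eventually_elim (simp add: abs_le_iff)
  then have upper: "L \<in> O(\<lambda>j. real j * ln (real j))"
    by (rule bigo_of_log_recurrence)
  define g where "g j = L j - real j * ln (real j)" for j
  have "(\<lambda>k. L (Suc k) - L k - ln (L k)) \<in> o(\<lambda>k. ln (real k))"
    using rec by (rule landau_o.big_small_trans) real_asymp
  moreover have "(\<lambda>k. ln (L k) - ln (real k)) \<in> o(\<lambda>k. ln (real k))"
    using lower upper pos by (rule ln_minus_ln_smallo)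
  moreover have "(\<lambda>k. real (Suc k) * ln (real (Suc k)) - real k * ln (real k) - ln (real k))
      \<in> o(\<lambda>k. ln (real k))"
    by real_asymp
  ultimately have "(\<lambda>k. (L (Suc k) - L k - ln (L k)) + (ln (L k) - ln (real k))
      - (real (Suc k) * ln (real (Suc k)) - real k * ln (real k) - ln (real k)))
      \<in> o(\<lambda>k. ln (real k))"
    by (rule sum_in_smallo(2)[OF sum_in_smallo(1)])
  also have "(\<lambda>k. (L (Suc k) - L k - ln (L k)) + (ln (L k) - ln (real k))
      - (real (Suc k) * ln (real (Suc k)) - real k * ln (real k) - ln (real k)))
      = (\<lambda>k. g (Suc k) - g k)"
    unfolding g_def by (rule ext) (simp only: algebra_simps)
  finally have "g \<in> o(\<lambda>j. real j * ln (real j))"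
  proof (rule smallo_of_increments_smallo)
    show "mono (\<lambda>k. ln (real k))"
    proof (rule monoI)
      fix a b :: nat
      assume "a \<le> b"
      then show "ln (real a) \<le> ln (real b)"
        by (cases "a = 0"; cases "b = 0") auto
    qed
    show "0 \<le> ln (real k)" for k
      by (cases "k = 0") auto
    show "filterlim (\<lambda>j. real j * ln (real j)) at_top sequentially"
      by real_asymp
  qed
  then show ?thesis
    unfolding g_def by (rule smallo_imp_asymp_equiv)
qed

theorem corollary7:
  fixes n :: nat
  assumes "n \<ge> 1"
  shows "(\<lambda>j. ln (real (iter_prime j n))) \<sim>[at_top] (\<lambda>j. real j * ln (real j))"
proof (rule asymp_equiv_of_log_recurrence)
  have "j < iter_prime j n" for j
  proof (induction j)
    case (Suc j)
    then show ?case
      using nth_prime_gt[of "iter_prime j n"] by simp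
  qed (use assms in simp)
  then have "j \<le> iter_prime j n" for j
    using less_imp_le by blast
  then have iter_lim: "filterlim (\<lambda>j. iter_prime j n) at_top sequentially"
    by (intro filterlim_at_top_mono[OF filterlim_ident] always_eventually allI)
  show "filterlim (\<lambda>j. ln (real (iter_prime j n))) at_top sequentially"
    using filterlim_compose[OF ln_at_top filterlim_compose[OF filterlim_real_sequentially iter_lim]]
    by simp
  show "(\<lambda>k. ln (real (iter_prime (Suc k) n)) - ln (real (iter_prime k n))
      - ln (ln (real (iter_prime k n)))) \<in> O(\<lambda>_. 1)"
    using landau_o.big.compose[OF ln_nth_prime_bigo iter_lim] by simp
qed

end
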